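(* Let $n\ge 2$ and let $\Omega\subset\mathbb{R}^n$ be a smooth bounded strictly convex domain. Let $f,g$ be positive $C^2$ functions of one real variable with $G(s):=g(s)+2s\,g'(s)>0$ for $s>0$. Let $u$ be the solution of \[ \mathrm{div}\big(g(|\nabla u|^2)\nabla u\big)=f(u)\,G(|\nabla u|^2)\ \text{in }\Omega,\qquad u=0\ \text{on }\partial\Omega, \] let $F(y)=\int_y^0 f(s)\,ds$ for $y\le 0$, and $\Phi(\mathbf{x};\beta)=|\nabla u(\mathbf{x})|^2-\beta F(u(\mathbf{x}))$. If $\beta\in[1,2]$, then $\Phi(\cdot;\beta)$ is not identically constant on $\overline\Omega$. *)

theory Defs
  imports "HOL-Analysis.Analysis"
begin

definition pd :: "'a::euclidean_space \<Rightarrow> ('a \<Rightarrow> real) \<Rightarrow> 'a \<Rightarrow> real" where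
  "pd b f x = frechet_derivative f (at x) b"

fun Ck :: "nat \<Rightarrow> 'a::euclidean_space set \<Rightarrow> ('a \<Rightarrow> real) \<Rightarrow> bool" where
  "Ck 0 U f = continuous_on U f"
| "Ck (Suc k) U f = (continuous_on U f \<and> (\<forall>x\<in>U. f differentiable (at x))
                      \<and> (\<forall>b\<in>Basis. Ck k U (pd b f)))"

definition smooth_fun :: "('a::euclidean_space \<Rightarrow> real) \<Rightarrow> bool" where
  "smooth_fun f \<longleftrightarrow> (\<forall>k. Ck k UNIV f)"

definition grad :: "('a::euclidean_space \<Rightarrow> real) \<Rightarrow> 'a \<Rightarrow> 'a" where
  "grad u x = (\<Sum>b\<in>Basis. pd b u x *\<^sub>R b)"

definition divg :: "('a::euclidean_space \<Rightarrow> 'a) \<Rightarrow> 'a \<Rightarrow> real" where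
  "divg V x = (\<Sum>b\<in>Basis. pd b (\<lambda>y. V y \<bullet> b) x)"

definition smooth_bounded_domain :: "'a::euclidean_space set \<Rightarrow> bool" where
  "smooth_bounded_domain \<Omega> \<longleftrightarrow> \<Omega> \<noteq> {} \<and> open \<Omega> \<and> connected \<Omega> \<and> bounded \<Omega> \<and>
     (\<exists>\<rho>. smooth_fun \<rho> \<and> \<Omega> = {x. \<rho> x < 0} \<and> (\<forall>x. \<rho> x = 0 \<longrightarrow> grad \<rho> x \<noteq> 0))"

definition strictly_convex_set :: "'a::euclidean_space set \<Rightarrow> bool" where
  "strictly_convex_set \<Omega> \<longleftrightarrow>
     (\<forall>x\<in>closure \<Omega>. \<forall>y\<in>closure \<Omega>. x \<noteq> y \<longrightarrow> open_segment x y \<subseteq> \<Omega>)"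

definition Fprim :: "(real \<Rightarrow> real) \<Rightarrow> real \<Rightarrow> real" where
  "Fprim f y = integral {y..0} f"

end

theory Submission
  imports Defs
begin

text \<open>If \<open>\<Phi>\<close> were constant, its value \<open>c\<close> could be read off at three kinds of points.
  On the boundary \<open>u = 0\<close> and \<open>F(0) = 0\<close>, so \<open>c = |\<nabla>u|\<^sup>2 \<ge> 0\<close>. If \<open>u\<close> took a negative value,
  at an interior minimum \<open>\<nabla>u = 0\<close> and \<open>F(u) > 0\<close> would give \<open>c < 0\<close>. Hence \<open>u \<ge> 0\<close>, \<open>F(u) = 0\<close>
  and \<open>c = 0\<close> at an interior maximum, so \<open>\<nabla>u\<close> vanishes identically; then the left-hand
  side of the equation is \<open>0\<close> while the right-hand side is \<open>f(u) g(0) > 0\<close>.\<close>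

lemma integral_pos_real:
  fixes f :: "real \<Rightarrow> real"
  assumes "a < b" "continuous_on {a..b} f" "\<forall>t\<in>{a..b}. 0 < f t"
  shows "0 < integral {a..b} f"
proof -
  obtain z where z: "z \<in> {a..b}" "\<forall>t\<in>{a..b}. f z \<le> f t"
    using continuous_attains_inf[OF compact_Icc _ assms(2)] assms(1) by auto
  have "0 < f z * (b - a)" using assms z by simp
  also have "\<dots> = integral {a..b} (\<lambda>_. f z)" using assms(1) by simp
  also have "\<dots> \<le> integral {a..b} f"
    using z assms(2) by (intro integral_le) (auto intro: integrable_continuous_interval)
  finally show ?thesis .
qed

lemma Fprim_pos:
  assumes "continuous_on UNIV f" "\<forall>s. 0 < f s" "y < 0"
  shows "0 < Fprim f y"
  unfolding Fprim_def
  using assms by (intro integral_pos_real) (auto intro: continuous_on_subset)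

lemma Fprim_eq_0:
  assumes "0 \<le> y"
  shows "Fprim f y = 0"
  unfolding Fprim_def using assms by (intro integral_unique has_integral_null_real) simp

lemma pd_eq_0_if_vanishing:
  fixes h :: "'a::euclidean_space \<Rightarrow> real"
  assumes "open S" "x \<in> S" "\<forall>y\<in>S. h y = 0"
  shows "pd b h x = 0"
proof -
  have "(h has_derivative (\<lambda>_. 0)) (at x)"
    by (rule has_derivative_transform_within_open[OF has_derivative_const assms(1,2)])
       (use assms(3) in auto)
  then show ?thesis
    unfolding pd_def by (metis frechet_derivative_at)
qed

lemma divg_eq_0_if_vanishing:
  fixes V :: "'a::euclidean_space \<Rightarrow> 'a"
  assumes "open S" "x \<in> S" "\<forall>y\<in>S. V y = 0"
  shows "divg V x = 0"
  unfolding divg_def using assms by (intro sum.neutral ballI pd_eq_0_if_vanishing) auto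

lemma grad_eq_0_at_local_extremum:
  fixes u :: "'a::euclidean_space \<Rightarrow> real"
  assumes "open S" "x \<in> S" "u differentiable (at x)"
    "(\<forall>y\<in>S. u y \<le> u x) \<or> (\<forall>y\<in>S. u x \<le> u y)"
  shows "grad u x = 0"
proof -
  have "frechet_derivative u (at x) = (\<lambda>v. 0)"
    using assms frechet_derivative_works by (intro differential_zero_maxmin) blast+
  then show ?thesis unfolding grad_def pd_def by simp
qed

lemma continuous_attains_sup_interior:
  fixes u :: "'a::euclidean_space \<Rightarrow> real"
  assumes "open \<Omega>" "bounded \<Omega>" "continuous_on (closure \<Omega>) u"
    and "x0 \<in> \<Omega>" "\<forall>z\<in>frontier \<Omega>. u z \<le> u x0"
  obtains x where "x \<in> \<Omega>" "\<forall>y\<in>closure \<Omega>. u y \<le> u x"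
proof -
  have "compact (closure \<Omega>)" "closure \<Omega> \<noteq> {}"
    using assms(2,4) compact_closure by auto
  then obtain xm where xm: "xm \<in> closure \<Omega>" "\<forall>y\<in>closure \<Omega>. u y \<le> u xm"
    using continuous_attains_sup[OF _ _ assms(3)] by blast
  show ?thesis
  proof (cases "xm \<in> \<Omega>")
    case True
    then show ?thesis using that xm by blast
  next
    case False
    then have "xm \<in> frontier \<Omega>"
      using xm(1) assms(1) by (simp add: frontier_def interior_open)
    then have "\<forall>y\<in>closure \<Omega>. u y \<le> u x0"
      using xm(2) assms(5) by (meson order_trans)
    then show ?thesis using that assms(4) by blast
  qed
qed

lemma continuous_attains_inf_interior:
  fixes u :: "'a::euclidean_space \<Rightarrow> real"
  assumes "open \<Omega>" "bounded \<Omega>" "continuous_on (closure \<Omega>) u"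
    and "x0 \<in> \<Omega>" "\<forall>z\<in>frontier \<Omega>. u x0 \<le> u z"
  obtains x where "x \<in> \<Omega>" "\<forall>y\<in>closure \<Omega>. u x \<le> u y"
proof -
  have "continuous_on (closure \<Omega>) (\<lambda>x. - u x)"
    using assms(3) by (intro continuous_intros)
  moreover have "\<forall>z\<in>frontier \<Omega>. - u z \<le> - u x0"
    using assms(5) by simp
  ultimately obtain x where "x \<in> \<Omega>" "\<forall>y\<in>closure \<Omega>. - u y \<le> - u x"
    using continuous_attains_sup_interior[OF assms(1,2) _ assms(4)] by blast
  then show ?thesis using that by simp
qed

lemma nonneg_if_energy_const:
  fixes u :: "'a::euclidean_space \<Rightarrow> real"
  assumes "open \<Omega>" "bounded \<Omega>" "continuous_on (closure \<Omega>) u"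
    and "\<forall>x\<in>\<Omega>. u differentiable (at x)" "\<forall>x\<in>frontier \<Omega>. u x = 0"
    and "\<forall>y<0. 0 < F y" "0 < \<beta>" "0 \<le> c"
    and "\<forall>x\<in>\<Omega>. (norm (grad u x))\<^sup>2 - \<beta> * F (u x) = c"
    and "x \<in> \<Omega>"
  shows "0 \<le> u x"
proof (rule ccontr)
  assume "\<not> 0 \<le> u x"
  then have "\<forall>z\<in>frontier \<Omega>. u x \<le> u z" using assms(5) by simp
  then obtain xm where xm: "xm \<in> \<Omega>" "\<forall>y\<in>closure \<Omega>. u xm \<le> u y"
    using continuous_attains_inf_interior[OF assms(1-3,10)] by blast
  then have "u xm < 0"
    using assms(10) \<open>\<not> 0 \<le> u x\<close> closure_subset by force
  moreover have "grad u xm = 0"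
    using xm closure_subset assms(1,4) by (intro grad_eq_0_at_local_extremum[of \<Omega>]) auto
  ultimately have "c = - \<beta> * F (u xm)" "0 < \<beta> * F (u xm)"
    using assms(6,7,9) xm(1) by auto
  then show False using \<open>0 \<le> c\<close> by simp
qed

lemma grad_eq_0_if_norm_grad_const:
  fixes u :: "'a::euclidean_space \<Rightarrow> real"
  assumes "open \<Omega>" "bounded \<Omega>" "continuous_on (closure \<Omega>) u"
    and "\<forall>x\<in>\<Omega>. u differentiable (at x)" "\<forall>x\<in>frontier \<Omega>. u x = 0" "\<forall>x\<in>\<Omega>. 0 \<le> u x"
    and "\<forall>x\<in>\<Omega>. norm (grad u x) = c"
    and "x \<in> \<Omega>"
  shows "grad u x = 0"
proof -
  have "\<forall>z\<in>frontier \<Omega>. u z \<le> u x" using assms(5,6,8) by simp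
  then obtain x0 where x0: "x0 \<in> \<Omega>" "\<forall>y\<in>closure \<Omega>. u y \<le> u x0"
    using continuous_attains_sup_interior[OF assms(1-3,8)] by blast
  then have "grad u x0 = 0"
    using closure_subset assms(1,4) by (intro grad_eq_0_at_local_extremum[of \<Omega>]) auto
  then show ?thesis using assms(7,8) x0(1) by (metis norm_eq_zero)
qed

theorem lemma3p2:
  fixes \<Omega> :: "'a::euclidean_space set"
    and f g :: "real \<Rightarrow> real"
    and u :: "'a \<Rightarrow> real"
    and Du :: "'a \<Rightarrow> 'a"
    and \<beta> :: real
  assumes dim: "DIM('a) \<ge> 2"
    and dom: "smooth_bounded_domain \<Omega>"
    and sconv: "strictly_convex_set \<Omega>"
    and f_pos: "\<forall>s. f s > 0" and f_C2: "Ck 2 UNIV f"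
    and g_pos: "\<forall>s. g s > 0" and g_C2: "Ck 2 UNIV g"
    and G_pos: "\<forall>s>0. g s + 2 * s * deriv g s > 0"
    and u_C2: "Ck 2 \<Omega> u"
    and u_cont: "continuous_on (closure \<Omega>) u"
    and Du_cont: "continuous_on (closure \<Omega>) Du"
    and Du_grad: "\<forall>x\<in>\<Omega>. Du x = grad u x"
    and pde: "\<forall>x\<in>\<Omega>. divg (\<lambda>y. g ((norm (grad u y))\<^sup>2) *\<^sub>R grad u y) x
                 = f (u x) * (g ((norm (grad u x))\<^sup>2)
                              + 2 * (norm (grad u x))\<^sup>2 * deriv g ((norm (grad u x))\<^sup>2))"
    and bc: "\<forall>x\<in>frontier \<Omega>. u x = 0"
    and beta: "1 \<le> \<beta>" "\<beta> \<le> 2"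
  shows "\<not> (\<exists>c. \<forall>x\<in>closure \<Omega>. (norm (Du x))\<^sup>2 - \<beta> * Fprim f (u x) = c)"
proof
  assume "\<exists>c. \<forall>x\<in>closure \<Omega>. (norm (Du x))\<^sup>2 - \<beta> * Fprim f (u x) = c"
  then obtain c where \<Phi>: "\<forall>x\<in>closure \<Omega>. (norm (Du x))\<^sup>2 - \<beta> * Fprim f (u x) = c" by blast
  have op: "open \<Omega>" and bd: "bounded \<Omega>" and ne: "\<Omega> \<noteq> {}"
    using dom unfolding smooth_bounded_domain_def by auto
  have u_diff: "\<forall>x\<in>\<Omega>. u differentiable (at x)" and f_cont: "continuous_on UNIV f"
    using u_C2 f_C2 by (simp_all add: numeral_2_eq_2)
  have \<Phi>_interior: "\<forall>x\<in>\<Omega>. (norm (grad u x))\<^sup>2 - \<beta> * Fprim f (u x) = c"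
    using \<Phi> Du_grad closure_subset by fastforce
  obtain z where "z \<in> frontier \<Omega>"
    using frontier_not_empty[OF ne] bd not_bounded_UNIV by blast
  then have "z \<in> closure \<Omega>" "u z = 0" using bc by (auto simp: frontier_def)
  then have "0 \<le> c" using \<Phi> Fprim_eq_0[of 0 f] by fastforce
  then have u_nonneg: "\<forall>x\<in>\<Omega>. 0 \<le> u x"
    using nonneg_if_energy_const[OF op bd u_cont u_diff bc _ _ _ \<Phi>_interior]
      Fprim_pos[OF f_cont f_pos] beta by simp
  have "\<forall>x\<in>\<Omega>. (norm (grad u x))\<^sup>2 = c"
    using \<Phi>_interior Fprim_eq_0 u_nonneg by simp
  then have "\<forall>x\<in>\<Omega>. norm (grad u x) = sqrt c"
    by (metis norm_ge_zero real_sqrt_unique)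
  then have grad_vanishes: "\<forall>x\<in>\<Omega>. grad u x = 0"
    using grad_eq_0_if_norm_grad_const[OF op bd u_cont u_diff bc u_nonneg] by blast
  obtain x0 where x0: "x0 \<in> \<Omega>" using ne by blast
  then have "divg (\<lambda>y. g ((norm (grad u y))\<^sup>2) *\<^sub>R grad u y) x0 = 0"
    using op grad_vanishes by (intro divg_eq_0_if_vanishing) auto
  moreover have "divg (\<lambda>y. g ((norm (grad u y))\<^sup>2) *\<^sub>R grad u y) x0 = f (u x0) * g 0"
    using pde x0 grad_vanishes by simp
  moreover have "0 < f (u x0) * g 0"
    using f_pos g_pos by simp
  ultimately show False by linarith
qed

end
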